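(* Let $p\ge 5$ be a prime and $n,k\in\mathbb{N}$ with $n>k$. Then for $1\le j\le \frac{p-1}{2}$, \[ \binom{2kp+2j}{kp+j}\binom{2np-2kp-2j}{np-kp-j}\equiv \frac{2p}{j}\binom{2k}{k}\binom{2n-2k-2}{n-k-1}(2k+1-2n)\pmod{p^2}, \] and for $\frac{p+1}{2}\le j\le p-1$, \[ \binom{2kp+2j}{kp+j}\binom{2np-2kp-2j}{np-kp-j}\equiv \frac{2p}{j}\binom{2k}{k}\binom{2n-2k-2}{n-k-1}(2k+1)\pmod{p^2}. \]
   Context: For rationals $a,b$, $a\equiv b\pmod{p^m}$ means $(a-b)/p^m$ is a rational number whose denominator is not divisible by $p$. *)

theory Defs
  imports Complex_Main "HOL-Computational_Algebra.Primes"
begin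

definition rat_cong :: "rat \<Rightarrow> rat \<Rightarrow> int \<Rightarrow> nat \<Rightarrow> bool" where
  "rat_cong a b p m \<longleftrightarrow> \<not> p dvd snd (quotient_of ((a - b) / of_int (p ^ m)))"

end

theory Submission
  imports Defs "HOL-Number_Theory.Number_Theory"
begin

(* Let (x!)_p be the product of the integers in [1, x] prime to p, so that
   x! = p^(x div p) (x div p)! (x!)_p.  Writing y = a p + s with s < p, this gives
   binom(2y, y) ((y!)_p)^2 = binom(2a, a) ((2y)!)_p, with an extra factor p (2a + 1)
   exactly when 2s > p.  For y = k p + j and z = n p - y the residues are j and p - j,
   so exactly one of the two central binomials carries the factor p, and the product
   equals p times the claimed integer times the p-adic unit
   ((2y)!)_p ((2z)!)_p / ((y!)_p (z!)_p)^2.  Since y + z = n p, the generalised Wilson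
   congruence (x!)_p = (-1)^(x div p) (x mod p)! and the reflection r! (p - r)! = (-1)^r r
   (mod p) evaluate this unit modulo p as -2j / j^2 or 2j / j^2, according as 2j < p or not. *)

definition pfree_fact :: "nat \<Rightarrow> nat \<Rightarrow> nat" where
  "pfree_fact p x = (\<Prod>i \<in> {i \<in> {1..x}. \<not> p dvd i}. i)"

lemma pfree_fact_0 [simp]: "pfree_fact p 0 = 1"
  by (simp add: pfree_fact_def)

lemma pfree_fact_Suc:
  "pfree_fact p (Suc x) = (if p dvd Suc x then pfree_fact p x else Suc x * pfree_fact p x)"
proof -
  have "{i \<in> {1..Suc x}. \<not> p dvd i} =
        (if p dvd Suc x then {i \<in> {1..x}. \<not> p dvd i} else insert (Suc x) {i \<in> {1..x}. \<not> p dvd i})"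
    by (auto simp: le_Suc_eq)
  then show ?thesis
    by (simp add: pfree_fact_def)
qed

lemma prime_not_dvd_pfree_fact:
  assumes "prime p"
  shows "\<not> p dvd pfree_fact p x"
  using assms by (auto simp: pfree_fact_def prime_dvd_prod_iff)

lemma div_mod_Suc_dvd:
  fixes p x :: nat
  assumes "p > 0" and "p dvd Suc x"
  shows "Suc x div p = Suc (x div p)" and "x mod p = p - 1" and "Suc x = p * Suc (x div p)"
proof -
  have "Suc x mod p = 0"
    using assms(2) by simp
  then have "Suc (x mod p) = p"
    by (simp add: mod_Suc split: if_splits)
  moreover have "Suc x = p * (x div p) + Suc (x mod p)"
    by simp
  ultimately show "Suc x div p = Suc (x div p)" and "x mod p = p - 1" and "Suc x = p * Suc (x div p)"
    using assms(1) by simp_all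
qed

lemma div_mod_Suc_not_dvd:
  fixes p x :: nat
  assumes "\<not> p dvd Suc x"
  shows "Suc x div p = x div p" and "Suc x mod p = Suc (x mod p)"
proof -
  have "Suc (x mod p) \<noteq> p"
    using assms by (metis dvd_eq_mod_eq_0 mod_Suc)
  then show "Suc x div p = x div p" and "Suc x mod p = Suc (x mod p)"
    by (simp_all add: div_Suc mod_Suc)
qed

lemma add_mult_div_mod:
  fixes s c p :: nat
  assumes "s < p"
  shows "(s + c * p) div p = c" and "(s + c * p) mod p = s"
  using assms by simp_all

lemma fact_eq_pfree_fact:
  assumes "p > 0"
  shows "fact x = p ^ (x div p) * fact (x div p) * pfree_fact p x"
proof (induction x)
  case 0
  then show ?case by simp
next
  case (Suc x)
  show ?case
  proof (cases "p dvd Suc x")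
    case True
    note div_mod = div_mod_Suc_dvd[OF assms True]
    have "fact (Suc x) = Suc x * fact x"
      by simp
    also have "\<dots> = p * Suc (x div p) * (p ^ (x div p) * fact (x div p) * pfree_fact p x)"
      by (simp only: Suc.IH div_mod(3))
    also have "\<dots> = p ^ Suc (x div p) * fact (Suc (x div p)) * pfree_fact p x"
      by (simp only: fact_Suc power_Suc of_nat_id) (simp add: algebra_simps)
    finally show ?thesis
      using True div_mod(1) by (simp add: pfree_fact_Suc)
  next
    case False
    then show ?thesis
      using Suc div_mod_Suc_not_dvd[OF False] by (simp add: pfree_fact_Suc algebra_simps)
  qed
qed

lemma pfree_fact_cong:
  assumes "prime p"
  shows "[int (pfree_fact p x) = (-1) ^ (x div p) * fact (x mod p)] (mod p)"
proof (induction x)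
  case 0
  then show ?case by simp
next
  case (Suc x)
  show ?case
  proof (cases "p dvd Suc x")
    case True
    note div_mod = div_mod_Suc_dvd[OF prime_gt_0_nat[OF assms] True]
    have "[(-1) ^ (x div p) * fact (p - 1) = (-1) ^ (x div p) * (-1 :: int)] (mod p)"
      using wilson_theorem[OF assms] by (rule cong_scalar_left)
    then show ?thesis
      using Suc True div_mod(1,2) by (auto simp: pfree_fact_Suc intro: cong_trans)
  next
    case False
    note div_mod = div_mod_Suc_not_dvd[OF False]
    have "[int (Suc x) = int (Suc (x mod p))] (mod p)"
      by (metis div_mod(2) cong_int_iff cong_mod_left cong_refl)
    then have "[int (Suc x) * int (pfree_fact p x) =
               int (Suc (x mod p)) * ((-1) ^ (x div p) * fact (x mod p))] (mod p)"
      using Suc by (rule cong_mult)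
    then show ?thesis
      using False div_mod by (simp add: pfree_fact_Suc algebra_simps)
  qed
qed

lemma fact_mult_fact_complement_cong:
  assumes "r < p"
  shows "[(-1) ^ r * fact r * fact (p - 1 - r) = (fact (p - 1) :: int)] (mod p)"
  using assms
proof (induction r)
  case 0
  then show ?case by simp
next
  case (Suc r)
  have "p - 1 - r = Suc (p - 1 - Suc r)"
    using Suc.prems by simp
  then have fact_eq: "(fact (p - 1 - r) :: int) = int (p - 1 - r) * fact (p - 1 - Suc r)"
    by (metis fact_Suc of_nat_Suc)
  have "[int (p - 1 - r) = - int (Suc r)] (mod p)"
    using Suc.prems by (simp add: cong_iff_dvd_diff of_nat_diff)
  then have "[(-1) ^ r * fact r * fact (p - 1 - r) =
              (-1) ^ r * fact r * (- int (Suc r) * fact (p - 1 - Suc r)) :: int] (mod p)"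
    unfolding fact_eq by (intro cong_mult cong_refl)
  also have "(-1) ^ r * fact r * (- int (Suc r) * fact (p - 1 - Suc r)) =
             ((-1) ^ Suc r * fact (Suc r) * fact (p - 1 - Suc r) :: int)"
    by (simp add: algebra_simps)
  finally have "[(-1) ^ Suc r * fact (Suc r) * fact (p - 1 - Suc r) =
                 (-1) ^ r * fact r * fact (p - 1 - r) :: int] (mod p)"
    by (rule cong_sym)
  then show ?case
    using Suc.IH Suc.prems by (auto intro: cong_trans)
qed

lemma fact_mult_fact_diff_cong:
  assumes "prime p" and "0 < r" and "r < p"
  shows "[fact r * fact (p - r) = (-1) ^ r * int r] (mod p)"
proof -
  have "p - r = Suc (p - 1 - r)"
    using assms by simp
  then have fact_eq: "(fact (p - r) :: int) = int (p - r) * fact (p - 1 - r)"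
    by (metis fact_Suc of_nat_Suc)
  have "[int (p - r) = - int r] (mod p)"
    using assms by (simp add: cong_iff_dvd_diff of_nat_diff)
  then have "[fact r * fact (p - r) = fact r * (- int r * fact (p - 1 - r)) :: int] (mod p)"
    unfolding fact_eq by (intro cong_mult cong_refl)
  also have "fact r * (- int r * fact (p - 1 - r)) = - int r * (fact r * fact (p - 1 - r))"
    by (simp add: algebra_simps)
  also have "[\<dots> = - int r * (- ((-1) ^ r))] (mod p)"
  proof (rule cong_scalar_left)
    have "[(-1) ^ r * ((-1) ^ r * fact r * fact (p - 1 - r)) = (-1) ^ r * (- 1 :: int)] (mod p)"
      using cong_trans[OF fact_mult_fact_complement_cong[OF assms(3)] wilson_theorem[OF assms(1)]]
      by (rule cong_scalar_left)
    then show "[fact r * fact (p - 1 - r) = (- ((-1) ^ r) :: int)] (mod p)"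
      by (simp add: mult.assoc flip: power_add mult_2)
  qed
  finally show ?thesis
    by (simp add: mult.commute)
qed

lemma pfree_fact_reflect_cong:
  assumes "prime p" and "\<not> p dvd x" and "x < N * p"
  shows "[int (pfree_fact p x * pfree_fact p (N * p - x)) =
          (-1) ^ (N - 1 + x mod p) * int (x mod p)] (mod p)"
proof -
  define a r where "a = x div p" and "r = x mod p"
  have x: "x = a * p + r"
    by (simp add: a_def r_def)
  have "0 < r" and "r < p"
    using assms prime_gt_0_nat by (auto simp: r_def dvd_eq_mod_eq_0)
  have "a < N"
    using assms(3) x by (metis add_lessD1 mult_less_cancel2)
  then obtain c where N: "N = c + a + 1"
    by (metis add.commute add_Suc_right less_iff_Suc_add plus_1_eq_Suc)
  have "N * p = c * p + a * p + p"
    by (simp add: N algebra_simps)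
  then have y: "N * p - x = (p - r) + c * p"
    using x \<open>r < p\<close> by linarith
  have "p - r < p"
    using \<open>0 < r\<close> \<open>r < p\<close> by simp
  then have "(N * p - x) div p = c" and "(N * p - x) mod p = p - r"
    unfolding y by (rule add_mult_div_mod)+
  then have "[int (pfree_fact p (N * p - x)) = (-1) ^ c * fact (p - r)] (mod p)"
    using pfree_fact_cong[OF assms(1), of "N * p - x"] by simp
  moreover have "[int (pfree_fact p x) = (-1) ^ a * fact r] (mod p)"
    using pfree_fact_cong[OF assms(1), of x] by (simp add: a_def r_def)
  ultimately have "[int (pfree_fact p x * pfree_fact p (N * p - x)) =
                    (-1) ^ a * fact r * ((-1) ^ c * fact (p - r))] (mod p)"
    unfolding of_nat_mult by (rule cong_mult[rotated])
  also have "(-1) ^ a * fact r * ((-1) ^ c * fact (p - r)) = (-1) ^ (N - 1) * (fact r * fact (p - r) :: int)"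
    by (simp add: N power_add algebra_simps)
  also have "[(-1) ^ (N - 1) * (fact r * fact (p - r)) = (-1) ^ (N - 1) * ((-1) ^ r * int r)] (mod p)"
    using fact_mult_fact_diff_cong[OF assms(1) \<open>0 < r\<close> \<open>r < p\<close>] by (rule cong_scalar_left)
  finally show ?thesis
    by (simp add: r_def power_add mult.assoc)
qed

lemma fact_double: "fact (2 * m) = fact m ^ 2 * (2 * m choose m)"
  using binomial_fact_lemma[of m "2 * m"] by (simp add: mult_2 power2_eq_square)

lemma central_binomial_pfree_fact:
  fixes p y :: nat
  assumes "p > 0"
  shows "(2 * y choose y) * pfree_fact p y ^ 2 =
         (if 2 * (y mod p) < p then 1 else p * (2 * (y div p) + 1))
           * (2 * (y div p) choose (y div p)) * pfree_fact p (2 * y)"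
proof -
  define a s where "a = y div p" and "s = y mod p"
  define F where "F = (if 2 * s < p then 1 else p * (2 * a + 1))"
  have "s < p"
    using assms by (simp add: s_def)
  have y: "y = s + a * p"
    by (simp add: a_def s_def)
  have carry: "p ^ (2 * y div p) * fact (2 * y div p) = (p ^ a * fact a) ^ 2 * (F * (2 * a choose a))"
  proof (cases "2 * s < p")
    case True
    have "2 * y = 2 * s + (2 * a) * p"
      by (simp add: y algebra_simps)
    then have "2 * y div p = 2 * a"
      using add_mult_div_mod(1)[OF True] by simp
    then show ?thesis
      using True by (simp add: F_def fact_double power_even_eq power_mult_distrib)
  next
    case False
    have "2 * y = (2 * s - p) + (2 * a + 1) * p"
      using False by (simp add: y algebra_simps)
    moreover have "2 * s - p < p"
      using \<open>s < p\<close> by simp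
    ultimately have "2 * y div p = 2 * a + 1"
      by (metis add_mult_div_mod(1))
    then show ?thesis
      using False by (simp add: F_def fact_double power_even_eq power_mult_distrib) (simp add: algebra_simps)
  qed
  have "(p ^ a * fact a) ^ 2 * ((2 * y choose y) * pfree_fact p y ^ 2) = fact (2 * y)"
    using fact_eq_pfree_fact[OF assms, of y] by (simp add: fact_double a_def power_mult_distrib)
  also have "\<dots> = (p ^ a * fact a) ^ 2 * (F * (2 * a choose a) * pfree_fact p (2 * y))"
    using fact_eq_pfree_fact[OF assms, of "2 * y"] carry by simp
  finally show ?thesis
    using assms by (simp add: F_def a_def s_def)
qed

lemma double_residue_sign_cong:
  fixes p r N :: nat
  assumes "odd p" and "0 < r" and "r < p" and "0 < N"
  shows "[(-1) ^ (2 * N - 1 + 2 * r mod p) * int (2 * r mod p) = (if 2 * r < p then - 2 else 2) * int r] (mod p)"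
proof (cases "2 * r < p")
  case True
  then have "2 * r mod p = 2 * r"
    by simp
  moreover have "odd (2 * N - 1 + 2 * r)"
    using \<open>0 < N\<close> by simp
  ultimately show ?thesis
    using True by simp
next
  case False
  then have "2 * r mod p = 2 * r - p"
    using \<open>r < p\<close> by (simp add: mod_if)
  moreover have "even (2 * N - 1 + (2 * r - p))"
    using False \<open>0 < N\<close> \<open>odd p\<close> by presburger
  moreover have "[int (2 * r - p) = 2 * int r] (mod p)"
    using False by (simp add: cong_iff_dvd_diff of_nat_diff)
  ultimately show ?thesis
    using False by simp
qed

lemma pfree_fact_double_reflect_cong:
  fixes p N x :: nat
  assumes "prime p" and "odd p" and "\<not> p dvd x" and "x < N * p"
  shows "[int (x mod p) * int (pfree_fact p (2 * x) * pfree_fact p (2 * (N * p - x))) =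
          (if 2 * (x mod p) < p then - 2 else 2) * int (pfree_fact p x * pfree_fact p (N * p - x)) ^ 2] (mod p)"
proof -
  define r c where "r = x mod p" and "c = (if 2 * r < p then - 2 else 2 :: int)"
  have "0 < r" and "r < p" and "0 < N"
    using assms prime_gt_0_nat by (auto simp: r_def dvd_eq_mod_eq_0 intro: gr0I)
  have "[int (pfree_fact p x * pfree_fact p (N * p - x)) ^ 2 = ((-1) ^ (N - 1 + r) * int r) ^ 2] (mod p)"
    using pfree_fact_reflect_cong[OF assms(1,3,4)] by (simp add: r_def cong_pow)
  then have W: "[int (pfree_fact p x * pfree_fact p (N * p - x)) ^ 2 = int r ^ 2] (mod p)"
    by (simp add: power_mult_distrib flip: power_mult)
  have "\<not> p dvd 2"
    using assms(2) primes_dvd_imp_eq[OF assms(1) two_is_prime_nat] by auto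
  then have "\<not> p dvd 2 * x"
    using assms(1,3) by (simp add: prime_dvd_mult_iff)
  moreover have "2 * x < (2 * N) * p" and "2 * (N * p - x) = (2 * N) * p - 2 * x"
    using assms(4) by (simp_all add: algebra_simps diff_mult_distrib2)
  ultimately have "[int (pfree_fact p (2 * x) * pfree_fact p (2 * (N * p - x))) =
              (-1) ^ (2 * N - 1 + 2 * x mod p) * int (2 * x mod p)] (mod p)"
    using pfree_fact_reflect_cong[OF assms(1), of "2 * x" "2 * N"] by simp
  also have "2 * x mod p = 2 * r mod p"
    by (simp add: r_def mod_mult_right_eq)
  also have "[(-1) ^ (2 * N - 1 + 2 * r mod p) * int (2 * r mod p) = c * int r] (mod p)"
    unfolding c_def using \<open>odd p\<close> \<open>0 < r\<close> \<open>r < p\<close> \<open>0 < N\<close> by (rule double_residue_sign_cong)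
  finally have "[int r * int (pfree_fact p (2 * x) * pfree_fact p (2 * (N * p - x))) = int r * (c * int r)] (mod p)"
    by (rule cong_scalar_left)
  also have "int r * (c * int r) = c * int r ^ 2"
    by (simp add: power2_eq_square)
  also have "[\<dots> = c * int (pfree_fact p x * pfree_fact p (N * p - x)) ^ 2] (mod p)"
    by (rule cong_scalar_left[OF cong_sym[OF W]])
  finally show ?thesis
    by (simp add: r_def c_def)
qed

lemma prime_square_dvd_of_cong:
  fixes p X Y V W c j :: int
  assumes "prime p" and "\<not> p dvd W" and "X * W = p * Y * V" and "[j * V = c * W] (mod p)"
  shows "p ^ 2 dvd j * X - c * p * Y"
proof -
  have "W * (j * X - c * p * Y) = p * Y * (j * V - c * W)"
    using assms(3) by (simp add: algebra_simps)
  moreover have "p dvd j * V - c * W"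
    using assms(4) by (simp add: cong_iff_dvd_diff)
  ultimately have "p ^ 2 dvd W * (j * X - c * p * Y)"
    by (simp add: power2_eq_square mult.assoc mult_dvd_mono)
  moreover have "coprime (p ^ 2) W"
    using assms(1,2) by (simp add: prime_imp_coprime)
  ultimately show ?thesis
    using coprime_dvd_mult_right_iff by blast
qed

lemma prime_square_dvd_central_binomial_product:
  fixes p j k m :: nat
  assumes "prime p" and "odd p" and "0 < j" and "j < p"
  shows "int p ^ 2 dvd int j * int ((2 * (k * p + j) choose (k * p + j)) * (2 * (m * p + (p - j)) choose (m * p + (p - j))))
           - (if 2 * j < p then - 2 * int (2 * m + 1) else 2 * int (2 * k + 1))
             * int p * int ((2 * k choose k) * (2 * m choose m))"
proof -
  define N y z where "N = k + m + 1" and "y = k * p + j" and "z = m * p + (p - j)"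
  define G where "G = (if 2 * j < p then 2 * m + 1 else 2 * k + 1)"
  define C where "C = (2 * k choose k) * (2 * m choose m)"
  have "p > 0"
    using assms(4) by simp
  have y_div_mod: "y div p = k" "y mod p = j"
    using add_mult_div_mod[OF \<open>j < p\<close>, of k] by (simp_all add: y_def add.commute)
  have "p - j < p"
    using assms(3,4) by simp
  from add_mult_div_mod[OF this, of m]
  have z_div_mod: "z div p = m" "z mod p = p - j"
    by (simp_all add: z_def add.commute)
  have "\<not> p dvd y" and "y < N * p" and "N * p - y = z"
    using y_div_mod assms(3,4) by (auto simp: dvd_eq_mod_eq_0 N_def y_def z_def algebra_simps)
  have "2 * j \<noteq> p"
    using assms(2) by auto
  then have "2 * (p - j) < p \<longleftrightarrow> \<not> 2 * j < p"
    using assms(4) by linarith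
  have "(2 * y choose y) * (2 * z choose z) * (pfree_fact p y * pfree_fact p z) ^ 2
        = ((2 * y choose y) * pfree_fact p y ^ 2) * ((2 * z choose z) * pfree_fact p z ^ 2)"
    by (simp add: power_mult_distrib)
  also have "\<dots> = p * (G * C) * (pfree_fact p (2 * y) * pfree_fact p (2 * z))"
    unfolding central_binomial_pfree_fact[OF \<open>p > 0\<close>] y_div_mod z_div_mod
    using \<open>2 * (p - j) < p \<longleftrightarrow> \<not> 2 * j < p\<close> by (simp add: G_def C_def algebra_simps)
  finally have "int ((2 * y choose y) * (2 * z choose z)) * int (pfree_fact p y * pfree_fact p z) ^ 2
        = int p * int (G * C) * int (pfree_fact p (2 * y) * pfree_fact p (2 * z))"
    by (metis of_nat_mult of_nat_power)
  moreover have "\<not> int p dvd int (pfree_fact p y * pfree_fact p z) ^ 2"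
    using assms(1) prime_not_dvd_pfree_fact by (simp add: prime_dvd_mult_iff prime_dvd_power_iff)
  moreover have "[int j * int (pfree_fact p (2 * y) * pfree_fact p (2 * z)) =
                  (if 2 * j < p then - 2 else 2) * int (pfree_fact p y * pfree_fact p z) ^ 2] (mod p)"
    using pfree_fact_double_reflect_cong[OF assms(1,2) \<open>\<not> p dvd y\<close> \<open>y < N * p\<close>]
    unfolding \<open>N * p - y = z\<close> y_div_mod .
  ultimately have dvd: "int p ^ 2 dvd int j * int ((2 * y choose y) * (2 * z choose z))
                   - (if 2 * j < p then - 2 else 2) * int p * int (G * C)"
    using assms(1) by (intro prime_square_dvd_of_cong) simp_all
  have coeff: "(if 2 * j < p then - 2 else 2) * int p * int (G * C) =
      (if 2 * j < p then - 2 * int (2 * m + 1) else 2 * int (2 * k + 1)) * int p * int C"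
    by (simp add: G_def)
  show ?thesis
    using dvd unfolding coeff unfolding y_def z_def C_def .
qed

lemma rat_cong_div_of_dvd:
  fixes p j L M :: int
  assumes "\<not> p dvd j" and "p ^ e dvd j * L - M"
  shows "rat_cong (of_int L) (of_int M / of_int j) p e"
proof (cases "p = 0")
  case True
  then show ?thesis
    unfolding rat_cong_def using quotient_of_denom_pos' by (metis dvd_0_left order.irrefl)
next
  case False
  obtain z where z: "j * L - M = p ^ e * z"
    using assms(2) by blast
  have "j \<noteq> 0" and "p ^ e \<noteq> 0"
    using assms(1) False by auto
  then have eq: "(of_int L - of_int M / of_int j) / of_int (p ^ e) = (of_int z / of_int j :: rat)"
    using arg_cong[OF z, of "of_int :: int \<Rightarrow> rat"] by (simp add: field_simps)
  obtain a b where ab: "quotient_of (of_int z / of_int j) = (a, b)"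
    by (cases "quotient_of (of_int z / of_int j)") auto
  have "of_int z / of_int j = (of_int a / of_int b :: rat)" and "b > 0"
    using quotient_of_div[OF ab] quotient_of_denom_pos[OF ab] by simp_all
  then have "z * b = a * j"
    using \<open>j \<noteq> 0\<close> by (simp add: field_simps flip: of_int_mult of_int_eq_iff)
  then have "b dvd a * j"
    by (metis dvd_triv_right)
  moreover have "coprime b a"
    using quotient_of_coprime[OF ab] by (simp add: coprime_commute)
  ultimately have "b dvd j"
    using coprime_dvd_mult_right_iff by blast
  then have "\<not> p dvd b"
    using assms(1) dvd_trans by blast
  then show ?thesis
    unfolding rat_cong_def eq ab by simp
qed

lemma rat_cong_central_binomial_product:
  fixes p n k j :: nat
  assumes "prime p" and "odd p" and "0 < j" and "j < p" and "k < n"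
  shows "rat_cong
      (of_nat ((2*k*p + 2*j) choose (k*p + j)) * of_nat ((2*n*p - 2*k*p - 2*j) choose (n*p - k*p - j)))
      (2 * of_nat p / of_nat j * of_nat ((2*k) choose k) * of_nat ((2*n - 2*k - 2) choose (n - k - 1))
         * (if 2 * j < p then 2 * of_nat k + 1 - 2 * of_nat n else 2 * of_nat k + 1))
      (int p) 2"
proof -
  obtain m where n: "n = k + m + 1"
    using \<open>k < n\<close> by (metis add.commute add_Suc_right less_iff_Suc_add plus_1_eq_Suc)
  define c :: int where "c = (if 2 * j < p then - 2 * int (2 * m + 1) else 2 * int (2 * k + 1))"
  define C where "C = ((2 * k) choose k) * ((2 * n - 2 * k - 2) choose (n - k - 1))"
  have idx: "2*n*p - 2*k*p - 2*j = 2 * (m * p + (p - j))" "n*p - k*p - j = m * p + (p - j)"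
    "2*k*p + 2*j = 2 * (k * p + j)" "2*n - 2*k - 2 = 2 * m" "n - k - 1 = m"
    using \<open>j < p\<close> by (simp_all add: n algebra_simps)
  from prime_square_dvd_central_binomial_product[OF assms(1-4), of k m]
  have dvd: "int p ^ 2 dvd int j * int (((2*k*p + 2*j) choose (k*p + j)) * ((2*n*p - 2*k*p - 2*j) choose (n*p - k*p - j)))
          - c * int p * int C"
    unfolding idx c_def C_def .
  have "\<not> int p dvd int j"
    using assms(3,4) by (auto dest: dvd_imp_le)
  from rat_cong_div_of_dvd[OF this dvd] have "rat_cong
      (of_nat ((2*k*p + 2*j) choose (k*p + j)) * of_nat ((2*n*p - 2*k*p - 2*j) choose (n*p - k*p - j)))
      (of_int (c * int p * int C) / of_int (int j)) (int p) 2"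
    by simp
  moreover have coeff: "of_int (c * int p * int C) / of_int (int j) =
      2 * of_nat p / of_nat j * of_nat ((2*k) choose k) * of_nat ((2*n - 2*k - 2) choose (n - k - 1))
         * (if 2 * j < p then 2 * of_nat k + 1 - 2 * of_nat n else 2 * of_nat k + (1 :: rat))"
    by (simp add: c_def C_def n field_simps)
  ultimately show ?thesis
    unfolding coeff by simp
qed

theorem mainTheorem3:
  fixes p n k j :: nat
  assumes "prime p" and "p \<ge> 5" and "n > k"
  shows "(1 \<le> j \<and> j \<le> (p - 1) div 2 \<longrightarrow>
           rat_cong
             (of_nat ((2*k*p + 2*j) choose (k*p + j)) * of_nat ((2*n*p - 2*k*p - 2*j) choose (n*p - k*p - j)))
             (2 * of_nat p / of_nat j * of_nat ((2*k) choose k) * of_nat ((2*n - 2*k - 2) choose (n - k - 1))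
                * (2 * of_nat k + 1 - 2 * of_nat n))
             (int p) 2)
       \<and> ((p + 1) div 2 \<le> j \<and> j \<le> p - 1 \<longrightarrow>
           rat_cong
             (of_nat ((2*k*p + 2*j) choose (k*p + j)) * of_nat ((2*n*p - 2*k*p - 2*j) choose (n*p - k*p - j)))
             (2 * of_nat p / of_nat j * of_nat ((2*k) choose k) * of_nat ((2*n - 2*k - 2) choose (n - k - 1))
                * (2 * of_nat k + 1))
             (int p) 2)"
proof -
  have "odd p"
    using assms(1,2) prime_odd_nat by simp
  show ?thesis
  proof (intro conjI impI, goal_cases)
    case 1
    then have "0 < j" and "j < p" and "2 * j < p"
      using \<open>odd p\<close> by (auto elim!: oddE)
    with rat_cong_central_binomial_product[OF assms(1) \<open>odd p\<close> \<open>0 < j\<close> \<open>j < p\<close> \<open>n > k\<close>]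
    show ?case
      by simp
  next
    case 2
    then have "0 < j" and "j < p" and "\<not> 2 * j < p"
      using \<open>odd p\<close> by (auto elim!: oddE)
    with rat_cong_central_binomial_product[OF assms(1) \<open>odd p\<close> \<open>0 < j\<close> \<open>j < p\<close> \<open>n > k\<close>]
    show ?case
      by simp
  qed
qed

end
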